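(* The map ${}'\epsilon$ restricts to a bijection ${}'\mathcal X^{0,+}_{N-2}\to{}'E^{0,+}_N$ and to a bijection ${}''\mathcal X^{0,+}_{N-2}\to{}''E^{0,+}_N$.
   Context: Let $N\ge 3$ be an odd integer and $F=\mathbb Z/2\mathbb Z$. For integers $i,j$ let $[i,j]=\{h\in\mathbb Z: i\le h\le j\}$ (empty if $i>j$). Let $S_N=[1,N]$. The set of all subsets of $S_N$ is an $F$-vector space with sum $X+X'=(X\cup X')-(X\cap X')$; let $E_N$ be the subspace of subsets of even cardinality. A $2$-element subset $\{i,j\}\subseteq S_N$ is written $ij$ when either ($i<j$ and $j-i$ odd) or ($i>j$ and $i-j$ even); each $2$-element subset has exactly one such writing. Let $\mathcal P_N$ be the set of all finite sets $B$ of pairwise disjoint $2$-element subsets of $S_N$; for $B\in\mathcal P_N$ let $\mathrm{supp}(B)=\bigcup_{X\in B}X$, $B^0=\{\{i,j\}\in B: i-j\text{ even}\}$, $B^1=\{\{i,j\}\in B: i-j\text{ odd}\}$. A set $X\subseteq S_N$ is $0$-covered (resp. $1$-covered) by $B^1$ if there are $a_1b_1,\dots,a_sb_s\in B^1$ ($s\ge 0$, so $a_r<b_r$) with $X=[a_1,b_1]\sqcup\dots\sqcup[a_s,b_s]$ (resp. $X=[a_1,b_1]\sqcup\dots\sqcup[a_s,b_s]\sqcup\{u\}$ for some $u$), disjoint unions. Let ${}^*\mathcal P_N$ be the set of $B\in\mathcal P_N$ such that: for every $ij\in B^1$ the set $[i+1,j-1]$ is $0$-covered by $B^1$; and there is a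 sequence $i_*(B)=(i_1,\dots,i_{2s})$ in $S_N$ with $B^0=\{i_{2s}i_1,i_{2s-1}i_2,\dots,i_{s+1}i_s\}$ (so $s=|B^0|$; the sequence is unique) such that, if $s\ge1$, each of $[i_1+1,i_2-1],\dots,[i_{s-1}+1,i_s-1],[i_{s+1}+1,i_{s+2}-1],\dots,[i_{2s-1}+1,i_{2s}-1]$ is $0$-covered by $B^1$. For $B\in{}^*\mathcal P_N$ with $i_*(B)=(i_1,\dots,i_{2s})$ consider: (I) $s=0$, or $s\ge1$ and $[1,i_1-1]$ and $[i_{2s}+1,N]$ are $0$-covered by $B^1$; (II) $N\notin\mathrm{supp}(B)$ and either $s=0$, or $s$ is odd and either (i) $[1,i_1-1]$ is $1$-covered and $[i_{2s}+1,N-1]$ is $0$-covered by $B^1$, or (ii) $[1,i_1-1]$ is $0$-covered and $[i_{2s}+1,N-1]$ is $1$-covered by $B^1$; (III) (I) holds and, if $s$ is even then $\{i,N\}\in B$ for some even $i$, if $s$ is odd then $\{i,N\}\in B$ for some odd $i$. Let $\mathcal X^+_{N-2}$, $\mathcal X^-_{N-2}$ be the sets of $B\in{}^*\mathcal P_N$ satisfying (II), (III) respectively, and $\mathcal X_{N-2}=\mathcal X^+_{N-2}\sqcup\mathcal X^-_{N-2}$. For $B\in\mathcal X^+_{N-2}$ with $s\ge1$ there is a unique $u_B$: in case (i), $u_B\in[1,i_1-1]$ with $[1,u_B-1]$, $[u_B+1,i_1-1]$ $0$-covered by $B^1$ ($u_B$ odd); in case (ii), $u_B\in[i_{2s}+1,N-1]$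 with $[i_{2s}+1,u_B-1]$, $[u_B+1,N-1]$ $0$-covered by $B^1$ ($u_B$ even). Put $[[ij]]=[i,j]$ if $i<j$ and $[[ij]]=[i,N]\cup[1,j]$ if $i>j$. For $B\in\mathcal X_{N-2}$ define ${}'\epsilon(B)\in E_N$: ${}'\epsilon(B)=\sum_{ij\in B}[[ij]]$ if $B\in\mathcal X^-_{N-2}$ or if $B\in\mathcal X^+_{N-2}$ with $|B^0|=0$; ${}'\epsilon(B)=\sum_{ij\in B}[[ij]]+[u_B,N]$ if $B\in\mathcal X^+_{N-2}$, $|B^0|$ odd, $u_B$ even; ${}'\epsilon(B)=\sum_{ij\in B}[[ij]]+\{N\}+[1,u_B]$ if $B\in\mathcal X^+_{N-2}$, $|B^0|$ odd, $u_B$ odd. Let $\mathcal X^{0,+}_{N-2}=\{B\in\mathcal X^+_{N-2}:|B^0|=0\}$, ${}'\mathcal X^{0,+}_{N-2}=\{B\in\mathcal X^{0,+}_{N-2}: N-1\notin\mathrm{supp}(B)\}$, ${}''\mathcal X^{0,+}_{N-2}=\{B\in\mathcal X^{0,+}_{N-2}: N-1\in\mathrm{supp}(B)\}$. For $X\in E_N$ let $\gamma(X)=|\{x\in X: x\text{ even}\}|-|\{x\in X:x\text{ odd}\}|$; let $E^{0,+}_N=\{X\in E_N: N\notin X,\ \gamma(X)=0\}$, ${}'E^{0,+}_N=\{X\in E^{0,+}_N:N-1\notin X\}$, ${}''E^{0,+}_N=\{X\in E^{0,+}_N:N-1\in X\}$. *)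

theory Defs
  imports "HOL-Library.Disjoint_Sets"
begin

definition PN :: "nat \<Rightarrow> nat set set set" where
  "PN N = {B. finite B \<and> (\<forall>p\<in>B. p \<subseteq> {1..N} \<and> card p = 2)
              \<and> (\<forall>p\<in>B. \<forall>q\<in>B. p \<noteq> q \<longrightarrow> p \<inter> q = {})}"

definition supp :: "nat set set \<Rightarrow> nat set" where
  "supp B = \<Union>B"

definition B0 :: "nat set set \<Rightarrow> nat set set" where
  "B0 B = {p\<in>B. even (Max p - Min p)}"

definition B1 :: "nat set set \<Rightarrow> nat set set" where
  "B1 B = {p\<in>B. odd (Max p - Min p)}"

definition wr :: "nat set \<Rightarrow> nat \<times> nat" where
  "wr p = (if odd (Max p - Min p) then (Min p, Max p) else (Max p, Min p))"

definition ivl :: "nat set \<Rightarrow> nat set" where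
  "ivl p = {fst (wr p)..snd (wr p)}"

definition zero_cov :: "nat set set \<Rightarrow> nat set \<Rightarrow> bool" where
  "zero_cov B X \<longleftrightarrow> (\<exists>C \<subseteq> B1 B. finite C \<and> disjoint_family_on ivl C \<and> X = \<Union>(ivl ` C))"

definition one_cov :: "nat set set \<Rightarrow> nat set \<Rightarrow> bool" where
  "one_cov B X \<longleftrightarrow> (\<exists>C \<subseteq> B1 B. \<exists>u. finite C \<and> disjoint_family_on ivl C
        \<and> u \<notin> \<Union>(ivl ` C) \<and> X = \<Union>(ivl ` C) \<union> {u})"

text \<open>A list xs = (i_1,...,i_{2s}) (0-indexed) is an admissible sequence for B:
  B^0 = { i_{2s} i_1, ..., i_{s+1} i_s } (with these writings), and the gaps
  [i_k+1, i_{k+1}-1] (k=1..s-1, s+1..2s-1) are 0-covered by B^1.\<close>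
definition seqok :: "nat set set \<Rightarrow> nat list \<Rightarrow> bool" where
  "seqok B xs \<longleftrightarrow> (let s = length xs div 2 in
      even (length xs)
    \<and> B0 B = (\<lambda>k. {xs!(2*s-1-k), xs!k}) ` {..<s}
    \<and> (\<forall>k<s. wr {xs!(2*s-1-k), xs!k} = (xs!(2*s-1-k), xs!k))
    \<and> (\<forall>k. k + 1 < s \<longrightarrow> zero_cov B {xs!k<..<xs!(k+1)})
    \<and> (\<forall>k. s \<le> k \<and> k + 1 < 2*s \<longrightarrow> zero_cov B {xs!k<..<xs!(k+1)}))"

definition starPN :: "nat \<Rightarrow> nat set set set" where
  "starPN N = {B\<in>PN N. (\<forall>p\<in>B1 B. zero_cov B {fst (wr p)<..<snd (wr p)})
                       \<and> (\<exists>xs. seqok B xs)}"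

definition istar :: "nat set set \<Rightarrow> nat list" where
  "istar B = (THE xs. seqok B xs)"

definition sB :: "nat set set \<Rightarrow> nat" where
  "sB B = card (B0 B)"

definition ifirst :: "nat set set \<Rightarrow> nat" where
  "ifirst B = hd (istar B)"
definition ilast :: "nat set set \<Rightarrow> nat" where
  "ilast B = last (istar B)"

definition condI :: "nat \<Rightarrow> nat set set \<Rightarrow> bool" where
  "condI N B \<longleftrightarrow> sB B = 0 \<or>
     (sB B \<ge> 1 \<and> zero_cov B {1..<ifirst B} \<and> zero_cov B {ilast B<..N})"

definition condII :: "nat \<Rightarrow> nat set set \<Rightarrow> bool" where
  "condII N B \<longleftrightarrow> N \<notin> supp B \<and> (sB B = 0 \<or>
     (odd (sB B) \<and>
       ((one_cov B {1..<ifirst B} \<and> zero_cov B {ilast B<..<N}) \<or>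
        (zero_cov B {1..<ifirst B} \<and> one_cov B {ilast B<..<N}))))"

definition condIII :: "nat \<Rightarrow> nat set set \<Rightarrow> bool" where
  "condIII N B \<longleftrightarrow> condI N B
     \<and> (even (sB B) \<longrightarrow> (\<exists>i. even i \<and> {i, N} \<in> B))
     \<and> (odd (sB B) \<longrightarrow> (\<exists>i. odd i \<and> {i, N} \<in> B))"

definition Xplus :: "nat \<Rightarrow> nat set set set" where
  "Xplus N = {B\<in>starPN N. condII N B}"
definition Xminus :: "nat \<Rightarrow> nat set set set" where
  "Xminus N = {B\<in>starPN N. condIII N B}"
definition XN :: "nat \<Rightarrow> nat set set set" where
  "XN N = Xplus N \<union> Xminus N"

definition uB :: "nat \<Rightarrow> nat set set \<Rightarrow> nat" where
  "uB N B = (if one_cov B {1..<ifirst B} \<and> zero_cov B {ilast B<..<N}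
     then (THE u. u \<in> {1..<ifirst B} \<and> zero_cov B {1..<u} \<and> zero_cov B {u<..<ifirst B})
     else (THE u. u \<in> {ilast B<..<N} \<and> zero_cov B {ilast B<..<u} \<and> zero_cov B {u<..<N}))"

definition dbr :: "nat \<Rightarrow> nat set \<Rightarrow> nat set" where
  "dbr N p = (let (i, j) = wr p in if i < j then {i..j} else {i..N} \<union> {1..j})"

text \<open>Sum in the F_2-vector space of subsets (symmetric difference) of [[ij]] over ij in B:
  x lies in the sum iff it lies in an odd number of summands.\<close>
definition ssum :: "nat \<Rightarrow> nat set set \<Rightarrow> nat set" where
  "ssum N B = {x. odd (card {p\<in>B. x \<in> dbr N p})}"

definition symd :: "nat set \<Rightarrow> nat set \<Rightarrow> nat set" where
  "symd X Y = (X \<union> Y) - (X \<inter> Y)"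

definition eps' :: "nat \<Rightarrow> nat set set \<Rightarrow> nat set" where
  "eps' N B = (if B \<in> Xminus N \<or> (B \<in> Xplus N \<and> card (B0 B) = 0) then ssum N B
     else if even (uB N B) then symd (ssum N B) {uB N B..N}
     else symd (symd (ssum N B) {N}) {1..uB N B})"

definition EN :: "nat \<Rightarrow> nat set set" where
  "EN N = {X. X \<subseteq> {1..N} \<and> even (card X)}"

definition gamma :: "nat set \<Rightarrow> int" where
  "gamma X = int (card {x\<in>X. even x}) - int (card {x\<in>X. odd x})"

definition E0p :: "nat \<Rightarrow> nat set set" where
  "E0p N = {X\<in>EN N. N \<notin> X \<and> gamma X = 0}"
definition E0p' :: "nat \<Rightarrow> nat set set" where
  "E0p' N = {X\<in>E0p N. N - 1 \<notin> X}"
definition E0p'' :: "nat \<Rightarrow> nat set set" where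
  "E0p'' N = {X\<in>E0p N. N - 1 \<in> X}"

definition X0p :: "nat \<Rightarrow> nat set set set" where
  "X0p N = {B\<in>Xplus N. card (B0 B) = 0}"
definition X0p' :: "nat \<Rightarrow> nat set set set" where
  "X0p' N = {B\<in>X0p N. N - 1 \<notin> supp B}"
definition X0p'' :: "nat \<Rightarrow> nat set set set" where
  "X0p'' N = {B\<in>X0p N. N - 1 \<in> supp B}"

end

theory Submission
  imports Defs
begin

(* On X^{0,+}_{N-2} every pair is written ij with i < j and j - i odd, N is not covered, and the
   interior of each pair is tiled by the intervals of other pairs.  So the intervals [i,j] form a
   nested family of odd arcs in [1, N-1], and eps' B is the set of points covered by an odd number
   of them.  Conversely, read a set X from left to right keeping the stack of left endpoints of the
   open arcs: the parity of the depth predicted by the stack decides whether the next point opens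
   an arc or closes the innermost open one.  On X = eps' B this recovers B.  For arbitrary X the
   scan maintains gamma (X \<inter> [1,y]) = gamma (X \<inter> U) for the stack U, whose elements in X all
   have the parity of its bottom element; hence gamma X = 0 forces an empty stack at the end, and
   the arcs found give X back.  Finally N - 1 lies in eps' B exactly when it is an endpoint of a
   pair of B. *)

section \<open>Nested families of odd arcs\<close>

definition arc :: "nat set \<Rightarrow> nat set" where
  "arc p = {Min p..Max p}"

definition depth :: "nat set set \<Rightarrow> nat \<Rightarrow> nat" where
  "depth B x = card {p\<in>B. x \<in> arc p}"

definition odd_depth_set :: "nat set set \<Rightarrow> nat set" where
  "odd_depth_set B = {x. odd (depth B x)}"

definition tiled_by :: "nat set set \<Rightarrow> nat set \<Rightarrow> bool" where
  "tiled_by B Z \<longleftrightarrow> (\<exists>C\<subseteq>B. finite C \<and> disjoint_family_on arc C \<and> Z = \<Union>(arc ` C))"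

definition odd_arc :: "nat \<Rightarrow> nat set \<Rightarrow> bool" where
  "odd_arc m p \<longleftrightarrow> (\<exists>a b. p = {a, b} \<and> 1 \<le> a \<and> a < b \<and> b \<le> m \<and> odd (b - a))"

definition nested_arcs :: "nat \<Rightarrow> nat set set set" where
  "nested_arcs m = {B. finite B \<and> (\<forall>p\<in>B. odd_arc m p) \<and> pairwise disjnt B
                      \<and> (\<forall>p\<in>B. tiled_by B {Min p<..<Max p})}"

lemma odd_arcE:
  assumes "odd_arc m p"
  obtains a b where "p = {a, b}" "1 \<le> a" "a < b" "b \<le> m" "odd (b - a)" "Min p = a" "Max p = b"
  using assms unfolding odd_arc_def by auto

lemma odd_arc_mono: "odd_arc m p \<Longrightarrow> m \<le> m' \<Longrightarrow> odd_arc m' p"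
  unfolding odd_arc_def by fastforce

lemma odd_arc_iff: "odd_arc m p \<longleftrightarrow> card p = 2 \<and> p \<subseteq> {1..m} \<and> odd (Max p - Min p)"
proof
  assume "odd_arc m p"
  then show "card p = 2 \<and> p \<subseteq> {1..m} \<and> odd (Max p - Min p)"
    by (elim odd_arcE) auto
next
  assume p: "card p = 2 \<and> p \<subseteq> {1..m} \<and> odd (Max p - Min p)"
  then obtain a b where "p = {a, b}" "a < b"
    by (metis card_2_iff insert_commute linorder_neqE_nat)
  with p show "odd_arc m p"
    unfolding odd_arc_def by auto
qed

lemma even_card_arc: "odd_arc m p \<Longrightarrow> even (card (arc p))"
  by (elim odd_arcE) (auto simp: arc_def)

lemma tiled_by_empty: "tiled_by B {}"
  unfolding tiled_by_def by (rule exI[of _ "{}"]) (auto simp: disjoint_family_on_def)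

lemma tiled_by_mono: "tiled_by B Z \<Longrightarrow> B \<subseteq> B' \<Longrightarrow> tiled_by B' Z"
  unfolding tiled_by_def by blast

lemma tiled_by_Un_arc:
  assumes "tiled_by B Z" "p \<in> B" "Z \<inter> arc p = {}"
  shows "tiled_by B (Z \<union> arc p)"
proof -
  obtain C where C: "C \<subseteq> B" "finite C" "disjoint_family_on arc C" "Z = \<Union>(arc ` C)"
    using assms(1) unfolding tiled_by_def by auto
  have "disjoint_family_on arc (insert p C)"
    using C(3,4) assms(3) unfolding disjoint_family_on_def by blast
  moreover have "Z \<union> arc p = \<Union>(arc ` insert p C)"
    using C(4) by auto
  ultimately show ?thesis
    unfolding tiled_by_def using C(1,2) assms(2) by (intro exI[of _ "insert p C"]) auto
qed

lemma tiled_by_even_card: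
  assumes "tiled_by B Z" "\<forall>p\<in>B. odd_arc m p"
  shows "even (card Z)"
proof -
  obtain C where C: "C \<subseteq> B" "finite C" "disjoint_family_on arc C" "Z = \<Union>(arc ` C)"
    using assms(1) unfolding tiled_by_def by auto
  have "card Z = (\<Sum>p\<in>C. card (arc p))"
    using C(2-4) by (simp add: card_UN_disjoint disjoint_family_on_def arc_def)
  moreover have "even (\<Sum>p\<in>C. card (arc p))"
    using C(1) assms(2) by (intro dvd_sum) (auto intro: even_card_arc)
  ultimately show ?thesis
    by simp
qed

lemma nested_arcs_mono: "B \<in> nested_arcs m \<Longrightarrow> m \<le> m' \<Longrightarrow> B \<in> nested_arcs m'"
  unfolding nested_arcs_def using odd_arc_mono by blast

lemma nested_arcs_insert:
  assumes "B \<in> nested_arcs m" "odd_arc m p" "p \<inter> \<Union>B = {}" "tiled_by B {Min p<..<Max p}"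
  shows "insert p B \<in> nested_arcs m"
proof -
  have "pairwise disjnt (insert p B)"
    using assms(1,3) unfolding nested_arcs_def by (auto simp: pairwise_insert disjnt_def)
  moreover have "tiled_by (insert p B) {Min q<..<Max q}" if "q \<in> insert p B" for q
  proof -
    have "tiled_by B {Min q<..<Max q}"
      using that assms(1,4) unfolding nested_arcs_def by auto
    then show ?thesis
      by (rule tiled_by_mono) auto
  qed
  moreover have "finite (insert p B)" "\<forall>q\<in>insert p B. odd_arc m q"
    using assms(1,2) unfolding nested_arcs_def by auto
  ultimately show ?thesis
    unfolding nested_arcs_def by blast
qed

lemma depth_insert:
  assumes "finite B" "p \<notin> B"
  shows "depth (insert p B) x = depth B x + (if x \<in> arc p then 1 else 0)"
proof (cases "x \<in> arc p")
  case True
  then have "{q\<in>insert p B. x \<in> arc q} = insert p {q\<in>B. x \<in> arc q}"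
    by blast
  with True assms show ?thesis
    by (simp add: depth_def)
next
  case False
  then have "{q\<in>insert p B. x \<in> arc q} = {q\<in>B. x \<in> arc q}"
    by blast
  with False show ?thesis
    by (simp add: depth_def)
qed

lemma depth_insert_plus_card_Diff:
  assumes "finite B" "p \<notin> B" "arc p = {a..t}" "a \<in> U" "x \<le> t"
  shows "depth (insert p B) x + card {u\<in>U - {a}. u \<le> x} = depth B x + card {u\<in>U. u \<le> x}"
proof (cases "a \<le> x")
  case True
  with assms(3,5) have "x \<in> arc p"
    by simp
  moreover have "{u\<in>U. u \<le> x} = insert a {u\<in>U - {a}. u \<le> x}"
    using True assms(4) by auto
  moreover have "finite {u\<in>U - {a}. u \<le> x}"
    by (rule finite_subset[of _ "{..x}"]) auto
  ultimately show ?thesis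
    using depth_insert[OF assms(1,2)] by simp
next
  case False
  with assms(3) have "x \<notin> arc p"
    by simp
  moreover have "{u\<in>U - {a}. u \<le> x} = {u\<in>U. u \<le> x}"
    using False by auto
  ultimately show ?thesis
    using depth_insert[OF assms(1,2)] by simp
qed

definition open_arcs :: "nat set set \<Rightarrow> nat \<Rightarrow> nat set set" where
  "open_arcs B y = {p\<in>B. Min p \<le> y \<and> y < Max p}"

definition closed_arcs :: "nat set set \<Rightarrow> nat \<Rightarrow> nat set set" where
  "closed_arcs B y = {p\<in>B. Max p \<le> y}"

text \<open>A scan of \<open>[1, y]\<close> with a stack \<open>U\<close> of left endpoints of open arcs: a new arc at
  \<open>Suc y\<close> would have depth \<open>card U + 1\<close>, so \<open>Suc y\<close> opens one exactly when its membership
  in \<open>X\<close> matches that parity; otherwise it closes the innermost open arc, or is skipped if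
  none is open.\<close>
fun decode :: "nat set \<Rightarrow> nat \<Rightarrow> nat set set \<times> nat set" where
  "decode X 0 = ({}, {})"
| "decode X (Suc y) = (case decode X y of (B, U) \<Rightarrow>
     if (Suc y \<in> X) = even (card U) then (B, insert (Suc y) U)
     else if U = {} then (B, U)
     else (insert {Max U, Suc y} B, U - {Max U}))"

context
  fixes m :: nat and B :: "nat set set"
  assumes nested: "B \<in> nested_arcs m"
begin

lemma nested_finite: "finite B"
  and nested_odd_arc: "p \<in> B \<Longrightarrow> odd_arc m p"
  and nested_interior_tiled: "p \<in> B \<Longrightarrow> tiled_by B {Min p<..<Max p}"
  using nested unfolding nested_arcs_def by auto

lemma nested_same_arc: "p \<in> B \<Longrightarrow> q \<in> B \<Longrightarrow> x \<in> p \<Longrightarrow> x \<in> q \<Longrightarrow> p = q"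
  using nested unfolding nested_arcs_def pairwise_def disjnt_def by blast

lemma nested_endpoints:
  assumes "p \<in> B"
  shows "1 \<le> Min p" "Min p < Max p" "Max p \<le> m"
  using nested_odd_arc[OF assms] by (auto elim: odd_arcE)

lemma nested_Min_Max_mem: "p \<in> B \<Longrightarrow> Min p \<in> p \<and> Max p \<in> p"
  using nested_odd_arc by (auto elim: odd_arcE)

lemma nested_finite_arc: "p \<in> B \<Longrightarrow> finite p"
  using nested_odd_arc by (auto elim: odd_arcE)

lemma inj_on_Min: "inj_on Min B"
  by (rule inj_onI) (use nested_Min_Max_mem nested_same_arc in metis)

lemma inj_on_Max: "inj_on Max B"
  by (rule inj_onI) (use nested_Min_Max_mem nested_same_arc in metis)

lemma arcs_with_Min:
  assumes "p \<in> B"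
  shows "{q\<in>B. Min q = Min p} = {p}"
proof (rule set_eqI)
  fix q
  show "q \<in> {q\<in>B. Min q = Min p} \<longleftrightarrow> q \<in> {p}"
    using assms inj_onD[OF inj_on_Min, of q p] by auto
qed

lemma arcs_with_Max:
  assumes "p \<in> B"
  shows "{q\<in>B. Max q = Max p} = {p}"
proof (rule set_eqI)
  fix q
  show "q \<in> {q\<in>B. Max q = Max p} \<longleftrightarrow> q \<in> {p}"
    using assms inj_onD[OF inj_on_Max, of q p] by auto
qed

lemma Max_neq_Min: "p \<in> B \<Longrightarrow> q \<in> B \<Longrightarrow> Max q \<noteq> Min p"
  using nested_Min_Max_mem nested_same_arc nested_endpoints(2) by (metis less_irrefl)

lemma nested_mem_iff:
  assumes "p \<in> B"
  shows "x \<in> p \<longleftrightarrow> x = Min p \<or> x = Max p"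
  using nested_odd_arc[OF assms] by (elim odd_arcE) auto

lemma endpoint_arc_within:
  "p \<in> B \<Longrightarrow> x \<in> arc p \<Longrightarrow> \<exists>q\<in>B. x \<in> q \<and> arc q \<subseteq> arc p"
proof (induction "Max p - Min p" arbitrary: p rule: less_induct)
  case less
  show ?case
  proof (cases "x \<in> p")
    case True
    with less.prems show ?thesis by blast
  next
    case False
    with nested_Min_Max_mem[OF less.prems(1)] have "x \<noteq> Min p" "x \<noteq> Max p"
      by auto
    with less.prems(2) have "x \<in> {Min p<..<Max p}"
      by (auto simp: arc_def)
    then obtain r where r: "r \<in> B" "x \<in> arc r" "arc r \<subseteq> {Min p<..<Max p}"
      using nested_interior_tiled[OF less.prems(1)] unfolding tiled_by_def by blast
    moreover from r(1) nested_endpoints(2)[of r] have "Min r \<in> arc r" "Max r \<in> arc r"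
      by (auto simp: arc_def)
    ultimately have "Min r \<in> {Min p<..<Max p}" "Max r \<in> {Min p<..<Max p}"
      by blast+
    then have "Max r - Min r < Max p - Min p"
      by auto
    with less.hyps r obtain q where "q \<in> B" "x \<in> q" "arc q \<subseteq> arc r"
      by blast
    moreover have "arc r \<subseteq> arc p"
      using r(3) by (auto simp: arc_def)
    ultimately show ?thesis
      by blast
  qed
qed

lemma arc_subset_Union: "p \<in> B \<Longrightarrow> arc p \<subseteq> \<Union>B"
  using endpoint_arc_within by blast

lemma arcs_nest:
  assumes "p \<in> B" "q \<in> B" "p \<noteq> q" "x \<in> q" "x \<in> arc p"
  shows "Min p < Min q \<and> Max q < Max p"
proof -
  obtain q' where "q' \<in> B" "x \<in> q'" "arc q' \<subseteq> arc p"
    using endpoint_arc_within assms(1,5) by blast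
  with assms(2,4) have "arc q \<subseteq> arc p"
    using nested_same_arc by blast
  moreover have "Min p \<noteq> Min q" "Max p \<noteq> Max q"
    using assms(1-3) nested_Min_Max_mem nested_same_arc by metis+
  ultimately show ?thesis
    using nested_endpoints(2)[OF assms(2)] by (auto simp: arc_def)
qed

lemma depth_outside:
  assumes "x \<notin> \<Union>B"
  shows "depth B x = 0"
proof -
  from assms have "{p\<in>B. x \<in> arc p} = {}"
    using arc_subset_Union by blast
  then show ?thesis
    unfolding depth_def by (simp only: card.empty)
qed

lemma odd_depth_set_subset: "odd_depth_set B \<subseteq> \<Union>B"
proof
  fix x
  assume "x \<in> odd_depth_set B"
  then show "x \<in> \<Union>B"
    using depth_outside by (cases "x \<in> \<Union>B") (auto simp: odd_depth_set_def)
qed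

lemma Union_subset: "\<Union>B \<subseteq> {1..m}"
  using nested_odd_arc by (auto simp: odd_arc_iff)

lemma depth_beyond: "m < x \<Longrightarrow> depth B x = 0"
  using Union_subset depth_outside by force

lemma odd_depth_set_subset_interval: "odd_depth_set B \<subseteq> {1..m}"
  using odd_depth_set_subset Union_subset by blast

lemma top_in_odd_depth_set_iff: "m \<in> odd_depth_set B \<longleftrightarrow> m \<in> \<Union>B"
proof
  assume "m \<in> \<Union>B"
  then obtain p where p: "p \<in> B" "m \<in> p"
    by blast
  have arcs_through_m: "{q\<in>B. m \<in> arc q} = {p}"
  proof (intro set_eqI iffI)
    fix q
    assume "q \<in> {q\<in>B. m \<in> arc q}"
    with nested_endpoints(3)[of q] nested_Min_Max_mem[of q] have "q \<in> B" "m \<in> q"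
      by (auto simp: arc_def)
    with p show "q \<in> {p}"
      using nested_same_arc by blast
  next
    fix q
    assume "q \<in> {p}"
    moreover have "m \<le> Max p"
      using p nested_finite_arc by (simp add: Max_ge)
    ultimately show "q \<in> {q\<in>B. m \<in> arc q}"
      using p nested_endpoints(2,3)[of p] by (auto simp: arc_def)
  qed
  then show "m \<in> odd_depth_set B"
    unfolding odd_depth_set_def mem_Collect_eq depth_def arcs_through_m by simp
qed (use odd_depth_set_subset in blast)

lemma arcs_through_Suc: "{p\<in>B. Suc y \<in> arc p} = open_arcs B y \<union> {p\<in>B. Min p = Suc y}"
  using nested_endpoints(2) by (force simp: arc_def open_arcs_def)

lemma open_arcs_Suc:
  "open_arcs B (Suc y) = (open_arcs B y - {p\<in>B. Max p = Suc y}) \<union> {p\<in>B. Min p = Suc y}"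
  using nested_endpoints(2) by (force simp: open_arcs_def)

lemma closed_arcs_Suc: "closed_arcs B (Suc y) = closed_arcs B y \<union> {p\<in>B. Max p = Suc y}"
  by (auto simp: closed_arcs_def le_Suc_eq)

lemma innermost_open_arc:
  assumes "p \<in> B" "Max p = Suc y" "q \<in> open_arcs B y"
  shows "Min q \<le> Min p"
proof (rule ccontr)
  assume "\<not> Min q \<le> Min p"
  moreover have q: "q \<in> B" "Min q \<le> y" "y < Max q"
    using assms(3) by (auto simp: open_arcs_def)
  ultimately have "Min q \<in> arc p" "q \<noteq> p"
    using assms(2) by (auto simp: arc_def)
  with assms(1) q(1) have "Max q < Max p"
    using arcs_nest nested_Min_Max_mem by blast
  with assms(2) q(3) show False
    by simp
qed

lemma arcs_step_outside:
  assumes "Suc y \<notin> \<Union>B"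
  shows "open_arcs B y = {}" "open_arcs B (Suc y) = {}"
    "closed_arcs B (Suc y) = closed_arcs B y" "depth B (Suc y) = 0"
proof -
  have no_Min: "{p\<in>B. Min p = Suc y} = {}" and no_Max: "{p\<in>B. Max p = Suc y} = {}"
    using assms nested_Min_Max_mem by fastforce+
  have "Suc y \<in> arc p" if "p \<in> open_arcs B y" for p
    using that by (auto simp: open_arcs_def arc_def)
  then show "open_arcs B y = {}"
    using assms arc_subset_Union by (fastforce simp: open_arcs_def)
  then show "open_arcs B (Suc y) = {}"
    unfolding open_arcs_Suc no_Min by simp
  show "closed_arcs B (Suc y) = closed_arcs B y"
    unfolding closed_arcs_Suc no_Max by simp
  show "depth B (Suc y) = 0"
    using assms by (rule depth_outside)
qed

lemma arcs_step_left_endpoint: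
  assumes "p \<in> B" "Min p = Suc y"
  shows "p \<notin> open_arcs B y" "open_arcs B (Suc y) = insert p (open_arcs B y)"
    "closed_arcs B (Suc y) = closed_arcs B y" "depth B (Suc y) = Suc (card (open_arcs B y))"
proof -
  have Min_p: "{q\<in>B. Min q = Suc y} = {p}"
    using arcs_with_Min[OF assms(1)] assms(2) by simp
  have no_Max: "{q\<in>B. Max q = Suc y} = {}"
    using assms Max_neq_Min[OF assms(1)] by auto
  show "p \<notin> open_arcs B y"
    using assms(2) by (simp add: open_arcs_def)
  moreover have "finite (open_arcs B y)"
    using nested_finite by (simp add: open_arcs_def)
  ultimately show "depth B (Suc y) = Suc (card (open_arcs B y))"
    unfolding depth_def arcs_through_Suc Min_p by simp
  show "open_arcs B (Suc y) = insert p (open_arcs B y)"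
    unfolding open_arcs_Suc Min_p no_Max by auto
  show "closed_arcs B (Suc y) = closed_arcs B y"
    unfolding closed_arcs_Suc no_Max by simp
qed

lemma arcs_step_right_endpoint:
  assumes "p \<in> B" "Max p = Suc y"
  shows "p \<in> open_arcs B y" "open_arcs B (Suc y) = open_arcs B y - {p}"
    "closed_arcs B (Suc y) = insert p (closed_arcs B y)" "depth B (Suc y) = card (open_arcs B y)"
    "Max (Min ` open_arcs B y) = Min p"
proof -
  have Max_p: "{q\<in>B. Max q = Suc y} = {p}"
    using arcs_with_Max[OF assms(1)] assms(2) by simp
  have no_Min: "{q\<in>B. Min q = Suc y} = {}"
    using assms Max_neq_Min[OF _ assms(1)] by force
  show "p \<in> open_arcs B y"
    using assms nested_endpoints(2)[OF assms(1)] by (simp add: open_arcs_def)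
  moreover have "finite (open_arcs B y)"
    using nested_finite by (simp add: open_arcs_def)
  ultimately show "Max (Min ` open_arcs B y) = Min p"
    using innermost_open_arc[OF assms] by (intro Max_eqI) auto
  show "depth B (Suc y) = card (open_arcs B y)"
    unfolding depth_def arcs_through_Suc no_Min by simp
  show "open_arcs B (Suc y) = open_arcs B y - {p}"
    unfolding open_arcs_Suc Max_p no_Min by simp
  show "closed_arcs B (Suc y) = insert p (closed_arcs B y)"
    unfolding closed_arcs_Suc Max_p by auto
qed

lemma decode_odd_depth_set:
  "decode (odd_depth_set B) y = (closed_arcs B y, Min ` open_arcs B y)"
proof (induction y)
  case 0
  have "closed_arcs B 0 = {}" "open_arcs B 0 = {}"
    using nested_endpoints(1,2) by (force simp: closed_arcs_def open_arcs_def)+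
  then show ?case
    by simp
next
  case (Suc y)
  define A where "A = open_arcs B y"
  have IH: "decode (odd_depth_set B) y = (closed_arcs B y, Min ` A)"
    using Suc A_def by simp
  have "A \<subseteq> B"
    by (auto simp: A_def open_arcs_def)
  then have card_Min_A: "card (Min ` A) = card A"
    using card_image inj_on_subset inj_on_Min by blast
  have mem: "Suc y \<in> odd_depth_set B \<longleftrightarrow> odd (depth B (Suc y))"
    by (simp add: odd_depth_set_def)
  consider (outside) "Suc y \<notin> \<Union>B"
    | (left) p where "p \<in> B" "Min p = Suc y"
    | (right) p where "p \<in> B" "Max p = Suc y"
    by (metis UnionE nested_mem_iff)
  then show ?case
  proof cases
    case outside
    with IH mem show ?thesis
      using arcs_step_outside[OF outside] by (simp add: A_def)
  next
    case left
    with IH mem card_Min_A show ?thesis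
      using arcs_step_left_endpoint[OF left] by (simp add: A_def)
  next
    case right
    note step = arcs_step_right_endpoint[OF right]
    have "Min ` (A - {p}) = Min ` A - {Min p}"
      using inj_on_image_set_diff[OF inj_on_Min, of A "{p}"] step(1) \<open>A \<subseteq> B\<close> by (auto simp: A_def)
    moreover have "{Min p, Suc y} = p"
      using right by (auto simp: nested_mem_iff)
    moreover have "Min ` A \<noteq> {}"
      using step(1) by (auto simp: A_def)
    ultimately show ?thesis
      using IH mem card_Min_A step by (simp add: A_def)
  qed
qed

lemma decode_odd_depth_set_top: "decode (odd_depth_set B) m = (B, {})"
proof -
  have "closed_arcs B m = B" "open_arcs B m = {}"
    using nested_endpoints(3) by (force simp: closed_arcs_def open_arcs_def)+
  then show ?thesis
    using decode_odd_depth_set by simp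
qed

end

lemma inj_on_odd_depth_set: "inj_on odd_depth_set (nested_arcs m)"
  by (rule inj_onI) (metis decode_odd_depth_set_top prod.inject)

section \<open>Decoding an arbitrary set\<close>

lemma gamma_empty [simp]: "gamma {} = 0"
  by (simp add: gamma_def)

lemma gamma_insert:
  assumes "finite A" "x \<notin> A"
  shows "gamma (insert x A) = gamma A + (if even x then 1 else -1)"
proof (cases "even x")
  case True
  then have "{z\<in>insert x A. even z} = insert x {z\<in>A. even z}" "{z\<in>insert x A. odd z} = {z\<in>A. odd z}"
    by auto
  with True assms show ?thesis
    by (simp add: gamma_def)
next
  case False
  then have "{z\<in>insert x A. even z} = {z\<in>A. even z}" "{z\<in>insert x A. odd z} = insert x {z\<in>A. odd z}"
    by auto
  with False assms show ?thesis
    by (simp add: gamma_def)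
qed

lemma gamma_Int_insert:
  assumes "finite A" "x \<notin> A"
  shows "gamma (X \<inter> insert x A) = gamma (X \<inter> A) + gamma (X \<inter> {x})"
proof (cases "x \<in> X")
  case True
  then have "X \<inter> insert x A = insert x (X \<inter> A)" "X \<inter> {x} = {x}"
    by auto
  with assms show ?thesis
    using gamma_insert[of "{}" x] by (simp add: gamma_insert)
next
  case False
  then have "X \<inter> insert x A = X \<inter> A" "X \<inter> {x} = {}"
    by auto
  then show ?thesis
    by simp
qed

lemma gamma_Int_pair_cancel:
  assumes "x \<in> X \<longleftrightarrow> y \<in> X" "even x \<longleftrightarrow> odd y"
  shows "gamma (X \<inter> {x}) + gamma (X \<inter> {y}) = 0"
proof (cases "x \<in> X")
  case True
  with assms(1) have "X \<inter> {x} = {x}" "X \<inter> {y} = {y}"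
    by auto
  with assms(2) show ?thesis
    using gamma_insert[of "{}" x] gamma_insert[of "{}" y] by simp
next
  case False
  with assms(1) have "X \<inter> {x} = {}" "X \<inter> {y} = {}"
    by auto
  then show ?thesis
    by simp
qed

lemma gamma_uniform_parity:
  assumes "finite A" "A \<noteq> {}" "\<forall>x\<in>A. even x \<longleftrightarrow> even a"
  shows "gamma A \<noteq> 0"
proof (cases "even a")
  case True
  with assms(3) have evens: "{x\<in>A. even x} = A" and odds: "{x\<in>A. odd x} = {}"
    by auto
  from assms(1,2) show ?thesis
    unfolding gamma_def evens odds by simp
next
  case False
  with assms(3) have evens: "{x\<in>A. even x} = {}" and odds: "{x\<in>A. odd x} = A"
    by auto
  from assms(1,2) show ?thesis
    unfolding gamma_def evens odds by simp
qed

lemma even_card_if_gamma_zero: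
  assumes "finite X" "gamma X = 0"
  shows "even (card X)"
proof -
  have "X = {x\<in>X. even x} \<union> {x\<in>X. odd x}"
    by auto
  then have "card X = card {x\<in>X. even x} + card {x\<in>X. odd x}"
    using assms(1) by (metis (no_types, lifting) card_Un_disjoint disjoint_iff finite_Un mem_Collect_eq)
  with assms(2) show ?thesis
    by (simp add: gamma_def)
qed

lemma card_below_Max:
  assumes "finite U" "U \<noteq> {}"
  shows "card {v\<in>U. v < Max U} = card U - 1"
proof -
  have "{v\<in>U. v < Max U} = U - {Max U}"
    using Max_ge[OF assms(1)] by fastforce
  with assms show ?thesis
    by simp
qed

definition stack_gaps_tiled :: "nat set set \<Rightarrow> nat \<Rightarrow> nat set \<Rightarrow> bool" where
  "stack_gaps_tiled B t U \<longleftrightarrow>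
     (\<forall>u\<in>U. \<forall>v\<in>insert t U. u < v \<and> {u<..<v} \<inter> U = {} \<longrightarrow> tiled_by B {u<..<v})"

definition parity_alternating :: "nat set \<Rightarrow> bool" where
  "parity_alternating U \<longleftrightarrow> (\<forall>u\<in>U. even (u + Min U + card {v\<in>U. v < u}))"

lemma stack_gaps_tiled_push:
  assumes gaps: "stack_gaps_tiled B t U" and below: "\<forall>u\<in>U. u < t"
  shows "stack_gaps_tiled B (Suc t) (insert t U)"
  unfolding stack_gaps_tiled_def
proof (intro ballI impI)
  fix u v
  assume u: "u \<in> insert t U" and v: "v \<in> insert (Suc t) (insert t U)"
    and uv: "u < v \<and> {u<..<v} \<inter> insert t U = {}"
  show "tiled_by B {u<..<v}"
  proof (cases "u = t")
    case True
    with uv v below have "{u<..<v} = {}"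
      by auto
    then show ?thesis
      using tiled_by_empty by simp
  next
    case False
    with u have "u \<in> U"
      by simp
    with uv v below have "v \<in> insert t U" "{u<..<v} \<inter> U = {}"
      by auto
    with gaps \<open>u \<in> U\<close> uv show ?thesis
      unfolding stack_gaps_tiled_def by blast
  qed
qed

lemma stack_gaps_tiled_pop:
  assumes gaps: "stack_gaps_tiled B t U" and fin: "finite U" and "U \<noteq> {}"
    and below: "\<forall>u\<in>U. u < t"
  shows "stack_gaps_tiled (insert {Max U, t} B) (Suc t) (U - {Max U})"
  unfolding stack_gaps_tiled_def
proof (intro ballI impI)
  define p where "p = {Max U, t}"
  have "Max U \<in> U"
    using fin \<open>U \<noteq> {}\<close> by simp
  then have arc_p: "arc p = {Max U..t}"
    using below by (simp add: arc_def p_def)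
  fix u v
  assume u: "u \<in> U - {Max U}" and v: "v \<in> insert (Suc t) (U - {Max U})"
    and uv: "u < v \<and> {u<..<v} \<inter> (U - {Max U}) = {}"
  have "u < Max U"
    using u fin by (simp add: order.not_eq_order_implies_strict)
  show "tiled_by (insert p B) {u<..<v}"
  proof (cases "v = Suc t")
    case False
    with v fin have "v \<in> U" "v \<le> Max U"
      by auto
    with uv have "{u<..<v} \<inter> U = {}"
      by auto
    with gaps u uv \<open>v \<in> U\<close> have "tiled_by B {u<..<v}"
      unfolding stack_gaps_tiled_def by blast
    then show ?thesis
      by (rule tiled_by_mono) auto
  next
    case True
    with uv \<open>Max U \<in> U\<close> below have "{u<..<Max U} \<inter> U = {}"
      by fastforce
    with gaps u \<open>u < Max U\<close> \<open>Max U \<in> U\<close> have "tiled_by B {u<..<Max U}"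
      unfolding stack_gaps_tiled_def by blast
    then have "tiled_by (insert p B) ({u<..<Max U} \<union> arc p)"
      by (rule tiled_by_Un_arc[OF tiled_by_mono]) (auto simp: arc_p)
    moreover have "{u<..<Max U} \<union> arc p = {u<..<v}"
      using True \<open>u < Max U\<close> \<open>Max U \<in> U\<close> below arc_p by auto
    ultimately show ?thesis
      by simp
  qed
qed

lemma parity_alternating_insert_top:
  assumes alt: "parity_alternating U" and fin: "finite U" and below: "\<forall>u\<in>U. u < t"
    and top: "U \<noteq> {} \<Longrightarrow> odd (t - Max U)"
  shows "parity_alternating (insert t U)"
proof (cases "U = {}")
  case True
  show ?thesis
    unfolding parity_alternating_def True
  proof
    fix u
    assume "u \<in> {t}"
    then have "u = t" "{v\<in>{t}. v < u} = {}"
      by auto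
    then show "even (u + Min {t} + card {v\<in>{t}. v < u})"
      unfolding \<open>{v\<in>{t}. v < u} = {}\<close> by simp
  qed
next
  case False
  have "Max U \<in> U" "Min U \<in> U"
    using fin False by simp_all
  then have "Min U < t"
    using below by blast
  then have Min_eq: "Min (insert t U) = Min U"
    using fin False by (simp add: Min_insert min.absorb2)
  have below_u: "{v\<in>insert t U. v < u} = {v\<in>U. v < u}" if "u \<in> U" for u
    using that below by auto
  have "card {v\<in>U. v < Max U} = card U - 1"
    using card_below_Max fin False by blast
  moreover have "even (Max U + Min U + card {v\<in>U. v < Max U})"
    using alt \<open>Max U \<in> U\<close> unfolding parity_alternating_def by blast
  moreover have "card U \<ge> 1" "Max U < t"
    using fin False below \<open>Max U \<in> U\<close> by (auto simp: Suc_le_eq card_gt_0_iff)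
  ultimately have "even (t + Min U + card U)"
    using top[OF False] by presburger
  moreover have "{v\<in>insert t U. v < t} = U"
    using below by auto
  ultimately show ?thesis
    using alt below_u unfolding parity_alternating_def Min_eq by auto
qed

lemma parity_alternating_remove_top:
  assumes alt: "parity_alternating U" and fin: "finite U"
  shows "parity_alternating (U - {Max U})"
proof (cases "U - {Max U} = {}")
  case True
  then show ?thesis
    unfolding parity_alternating_def True by simp
next
  case False
  then obtain w where "w \<in> U" "w \<noteq> Max U"
    by blast
  moreover have "Min U \<le> w" "w \<le> Max U"
    using fin \<open>w \<in> U\<close> by simp_all
  ultimately have "Min U < Max U"
    by simp
  with fin \<open>w \<in> U\<close> have "Min U \<in> U - {Max U}"
    using Min_in by auto
  with fin have Min_eq: "Min (U - {Max U}) = Min U"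
    by (intro Min_eqI) auto
  have "{v\<in>U - {Max U}. v < u} = {v\<in>U. v < u}" if "u \<in> U - {Max U}" for u
    using that Max_ge[OF fin, of u] by auto
  with alt show ?thesis
    unfolding parity_alternating_def Min_eq by auto
qed

text \<open>The state of \<open>decode X\<close> after reading \<open>[1, y]\<close>: \<open>B\<close> holds the arcs closed so far and
  \<open>U\<close> the left endpoints of the arcs still open.\<close>
definition decoder_inv :: "nat set \<Rightarrow> nat \<Rightarrow> nat set set \<Rightarrow> nat set \<Rightarrow> bool" where
  "decoder_inv X y B U \<longleftrightarrow>
     B \<in> nested_arcs y \<and> U \<subseteq> {1..y} \<and> U \<inter> \<Union>B = {} \<and> stack_gaps_tiled B (Suc y) U
   \<and> (\<forall>x\<in>{1..y}. x \<in> X \<longleftrightarrow> odd (depth B x + card {u\<in>U. u \<le> x}))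
   \<and> gamma (X \<inter> {1..y}) = gamma (X \<inter> U)
   \<and> parity_alternating U"

lemma decoder_inv_0: "decoder_inv X 0 {} {}"
  by (simp add: decoder_inv_def nested_arcs_def stack_gaps_tiled_def parity_alternating_def)

lemma decoder_inv_stack_mem:
  assumes inv: "decoder_inv X y B U" and "u \<in> U"
  shows "u \<in> X \<longleftrightarrow> even (card {v\<in>U. v < u})"
proof -
  from inv have nested: "B \<in> nested_arcs y" and sub: "U \<subseteq> {1..y}" and "U \<inter> \<Union>B = {}"
    and enc: "\<forall>x\<in>{1..y}. x \<in> X \<longleftrightarrow> odd (depth B x + card {u\<in>U. u \<le> x})"
    unfolding decoder_inv_def by auto
  have "finite U"
    using sub finite_subset by blast
  have "depth B u = 0"
    using depth_outside[OF nested] \<open>u \<in> U\<close> \<open>U \<inter> \<Union>B = {}\<close> by blast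
  moreover have "{v\<in>U. v \<le> u} = insert u {v\<in>U. v < u}"
    using \<open>u \<in> U\<close> by auto
  ultimately show ?thesis
    using enc sub \<open>u \<in> U\<close> \<open>finite U\<close> by auto
qed

lemma decoder_inv_top_gap:
  assumes inv: "decoder_inv X y B U" and "U \<noteq> {}"
  shows "Max U \<le> y" "even (y - Max U)" "tiled_by B {Max U<..<Suc y}"
proof -
  from inv have nested: "B \<in> nested_arcs y" and sub: "U \<subseteq> {1..y}"
    and gaps: "stack_gaps_tiled B (Suc y) U"
    unfolding decoder_inv_def by auto
  have fin: "finite U"
    using sub finite_subset by blast
  then have "Max U \<in> U"
    using \<open>U \<noteq> {}\<close> by simp
  then show "Max U \<le> y"
    using sub by auto
  have "{Max U<..<Suc y} \<inter> U = {}"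
    using fin by (auto dest: Max_ge[OF fin])
  with gaps \<open>Max U \<in> U\<close> \<open>Max U \<le> y\<close> show tiled: "tiled_by B {Max U<..<Suc y}"
    unfolding stack_gaps_tiled_def by auto
  have "even (card {Max U<..<Suc y})"
    using tiled_by_even_card[OF tiled] nested_odd_arc[OF nested] by blast
  then show "even (y - Max U)"
    by simp
qed

lemma decoder_inv_skip:
  assumes inv: "decoder_inv X y B {}" and "Suc y \<notin> X"
  shows "decoder_inv X (Suc y) B {}"
proof -
  from inv have nested: "B \<in> nested_arcs y" and enc: "\<forall>x\<in>{1..y}. x \<in> X \<longleftrightarrow> odd (depth B x)"
    and gam: "gamma (X \<inter> {1..y}) = 0"
    unfolding decoder_inv_def by auto
  have "\<forall>x\<in>{1..Suc y}. x \<in> X \<longleftrightarrow> odd (depth B x)"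
    using enc \<open>Suc y \<notin> X\<close> depth_beyond[OF nested, of "Suc y"] by (auto simp: le_Suc_eq)
  moreover have "X \<inter> {1..Suc y} = X \<inter> {1..y}"
    using \<open>Suc y \<notin> X\<close> by (auto simp: le_Suc_eq)
  ultimately show ?thesis
    using nested_arcs_mono[OF nested, of "Suc y"] gam
    by (simp add: decoder_inv_def stack_gaps_tiled_def parity_alternating_def)
qed

lemma decoder_inv_push_gamma:
  assumes inv: "decoder_inv X y B U"
  shows "gamma (X \<inter> {1..Suc y}) = gamma (X \<inter> insert (Suc y) U)"
proof -
  from inv have sub: "U \<subseteq> {1..y}" and gam: "gamma (X \<inter> {1..y}) = gamma (X \<inter> U)"
    unfolding decoder_inv_def by auto
  then have "finite U" "Suc y \<notin> U"
    using finite_subset by auto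
  then have "gamma (X \<inter> insert (Suc y) U) = gamma (X \<inter> U) + gamma (X \<inter> {Suc y})"
    by (rule gamma_Int_insert)
  moreover have "gamma (X \<inter> {1..Suc y}) = gamma (X \<inter> {1..y}) + gamma (X \<inter> {Suc y})"
    using gamma_Int_insert[of "{1..y}" "Suc y" X] by (simp add: atLeastAtMostSuc_conv)
  ultimately show ?thesis
    using gam by simp
qed

lemma decoder_inv_push:
  assumes inv: "decoder_inv X y B U" and push: "Suc y \<in> X \<longleftrightarrow> even (card U)"
  shows "decoder_inv X (Suc y) B (insert (Suc y) U)"
proof -
  from inv have nested: "B \<in> nested_arcs y" and sub: "U \<subseteq> {1..y}" and disj: "U \<inter> \<Union>B = {}"
    and gaps: "stack_gaps_tiled B (Suc y) U"
    and enc: "\<forall>x\<in>{1..y}. x \<in> X \<longleftrightarrow> odd (depth B x + card {u\<in>U. u \<le> x})"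
    and gam: "gamma (X \<inter> {1..y}) = gamma (X \<inter> U)" and alt: "parity_alternating U"
    unfolding decoder_inv_def by auto
  have fin: "finite U"
    using sub finite_subset by blast
  have below: "\<forall>u\<in>U. u < Suc y"
    using sub by auto
  have "Suc y \<notin> \<Union>B" "Suc y \<notin> U"
    using Union_subset[OF nested] sub by auto
  have "x \<in> X \<longleftrightarrow> odd (depth B x + card {u\<in>insert (Suc y) U. u \<le> x})" if "x \<in> {1..Suc y}" for x
  proof (cases "x = Suc y")
    case True
    then have "{u\<in>insert (Suc y) U. u \<le> x} = insert (Suc y) U"
      using below by auto
    with True push fin \<open>Suc y \<notin> U\<close> depth_beyond[OF nested] show ?thesis
      by simp
  next
    case False
    then have "x \<in> {1..y}" "{u\<in>insert (Suc y) U. u \<le> x} = {u\<in>U. u \<le> x}"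
      using that by auto
    with enc show ?thesis
      by simp
  qed
  moreover have "gamma (X \<inter> {1..Suc y}) = gamma (X \<inter> insert (Suc y) U)"
    using decoder_inv_push_gamma[OF inv] .
  moreover have "parity_alternating (insert (Suc y) U)"
  proof (rule parity_alternating_insert_top[OF alt fin below])
    assume "U \<noteq> {}"
    with decoder_inv_top_gap[OF inv] show "odd (Suc y - Max U)"
      by (simp add: Suc_diff_le)
  qed
  ultimately show ?thesis
    using nested_arcs_mono[OF nested, of "Suc y"] sub disj \<open>Suc y \<notin> \<Union>B\<close>
      stack_gaps_tiled_push[OF gaps below]
    unfolding decoder_inv_def by auto
qed

lemma decoder_inv_pop_gamma:
  assumes inv: "decoder_inv X y B U" and pop: "Suc y \<in> X \<longleftrightarrow> odd (card U)" and "U \<noteq> {}"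
  shows "gamma (X \<inter> {1..Suc y}) = gamma (X \<inter> (U - {Max U}))"
proof -
  from inv have "U \<subseteq> {1..y}" and gam: "gamma (X \<inter> {1..y}) = gamma (X \<inter> U)"
    unfolding decoder_inv_def by auto
  then have fin: "finite U"
    using finite_subset by blast
  then have "Max U \<in> U"
    using \<open>U \<noteq> {}\<close> by simp
  note top = decoder_inv_top_gap[OF inv \<open>U \<noteq> {}\<close>]
  have "card U \<noteq> 0"
    using fin \<open>U \<noteq> {}\<close> by simp
  then have "Max U \<in> X \<longleftrightarrow> Suc y \<in> X"
    using decoder_inv_stack_mem[OF inv \<open>Max U \<in> U\<close>] card_below_Max[OF fin \<open>U \<noteq> {}\<close>] pop
    by (cases "card U") auto
  moreover have "even (Max U) \<longleftrightarrow> odd (Suc y)"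
    using top(1,2) by presburger
  moreover have "gamma (X \<inter> U) = gamma (X \<inter> (U - {Max U})) + gamma (X \<inter> {Max U})"
    using gamma_Int_insert[of "U - {Max U}" "Max U" X] fin insert_Diff[OF \<open>Max U \<in> U\<close>] by simp
  moreover have "gamma (X \<inter> {1..Suc y}) = gamma (X \<inter> {1..y}) + gamma (X \<inter> {Suc y})"
    using gamma_Int_insert[of "{1..y}" "Suc y" X] by (simp add: atLeastAtMostSuc_conv)
  ultimately show ?thesis
    using gam gamma_Int_pair_cancel[of "Max U" X "Suc y"] by simp
qed

lemma decoder_inv_pop_nested:
  assumes inv: "decoder_inv X y B U" and "U \<noteq> {}"
  shows "insert {Max U, Suc y} B \<in> nested_arcs (Suc y)"
proof -
  from inv have nested: "B \<in> nested_arcs y" and sub: "U \<subseteq> {1..y}" and disj: "U \<inter> \<Union>B = {}"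
    unfolding decoder_inv_def by auto
  have "finite U"
    using sub finite_subset by blast
  with \<open>U \<noteq> {}\<close> have "Max U \<in> U"
    by simp
  note top = decoder_inv_top_gap[OF inv \<open>U \<noteq> {}\<close>]
  have "odd_arc (Suc y) {Max U, Suc y}"
    unfolding odd_arc_def using top(1,2) sub \<open>Max U \<in> U\<close>
    by (intro exI[of _ "Max U"] exI[of _ "Suc y"]) (auto simp: Suc_diff_le)
  moreover have "{Max U, Suc y} \<inter> \<Union>B = {}"
    using Union_subset[OF nested] \<open>Max U \<in> U\<close> disj by auto
  ultimately show ?thesis
    using top(1,3) by (intro nested_arcs_insert[OF nested_arcs_mono[OF nested]]) auto
qed

lemma decoder_inv_pop:
  assumes inv: "decoder_inv X y B U" and pop: "Suc y \<in> X \<longleftrightarrow> odd (card U)" and "U \<noteq> {}"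
  shows "decoder_inv X (Suc y) (insert {Max U, Suc y} B) (U - {Max U})"
proof -
  from inv have nested: "B \<in> nested_arcs y" and sub: "U \<subseteq> {1..y}" and disj: "U \<inter> \<Union>B = {}"
    and gaps: "stack_gaps_tiled B (Suc y) U"
    and enc: "\<forall>x\<in>{1..y}. x \<in> X \<longleftrightarrow> odd (depth B x + card {u\<in>U. u \<le> x})"
    and alt: "parity_alternating U"
    unfolding decoder_inv_def by auto
  define p where "p = {Max U, Suc y}"
  have fin: "finite U"
    using sub finite_subset by blast
  have below: "\<forall>u\<in>U. u < Suc y"
    using sub by auto
  have "Max U \<in> U"
    using fin \<open>U \<noteq> {}\<close> by simp
  note top = decoder_inv_top_gap[OF inv \<open>U \<noteq> {}\<close>]
  have Min_p: "Min p = Max U" and Max_p: "Max p = Suc y"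
    using top(1) by (auto simp: p_def)
  have "Suc y \<notin> \<Union>B" "Suc y \<notin> U"
    using Union_subset[OF nested] sub by auto
  then have "p \<notin> B"
    by (auto simp: p_def)
  have nested': "insert p B \<in> nested_arcs (Suc y)"
    using decoder_inv_pop_nested[OF inv \<open>U \<noteq> {}\<close>] by (simp add: p_def)
  have shift: "depth (insert p B) x + card {u\<in>U - {Max U}. u \<le> x} = depth B x + card {u\<in>U. u \<le> x}"
    if "x \<le> Suc y" for x
    using depth_insert_plus_card_Diff[OF nested_finite[OF nested] \<open>p \<notin> B\<close> _ \<open>Max U \<in> U\<close> that]
    by (simp add: arc_def Min_p Max_p)
  have "x \<in> X \<longleftrightarrow> odd (depth (insert p B) x + card {u\<in>U - {Max U}. u \<le> x})"
    if "x \<in> {1..Suc y}" for x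
  proof (cases "x = Suc y")
    case True
    then have "{u\<in>U. u \<le> x} = U"
      using below by auto
    with True pop shift depth_beyond[OF nested] show ?thesis
      by simp
  next
    case False
    with that enc shift show ?thesis
      by simp
  qed
  moreover have "gamma (X \<inter> {1..Suc y}) = gamma (X \<inter> (U - {Max U}))"
    using decoder_inv_pop_gamma[OF inv pop \<open>U \<noteq> {}\<close>] .
  ultimately show ?thesis
    using nested' sub disj \<open>Suc y \<notin> U\<close>
      stack_gaps_tiled_pop[OF gaps fin \<open>U \<noteq> {}\<close> below]
      parity_alternating_remove_top[OF alt fin]
    unfolding decoder_inv_def p_def by auto
qed

lemma decoder_inv_decode: "decoder_inv X y (fst (decode X y)) (snd (decode X y))"
proof (induction y)
  case 0
  show ?case
    using decoder_inv_0 by simp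
next
  case (Suc y)
  obtain B U where dec: "decode X y = (B, U)"
    by fastforce
  with Suc have inv: "decoder_inv X y B U"
    by simp
  consider (push) "Suc y \<in> X \<longleftrightarrow> even (card U)"
    | (skip) "Suc y \<notin> X" "U = {}"
    | (pop) "Suc y \<in> X \<longleftrightarrow> odd (card U)" "U \<noteq> {}"
    by (cases "U = {}") auto
  then show ?case
  proof cases
    case push
    with dec decoder_inv_push[OF inv push] show ?thesis
      by simp
  next
    case skip
    with dec inv decoder_inv_skip[of X y B] show ?thesis
      by simp
  next
    case pop
    with dec decoder_inv_pop[OF inv pop] show ?thesis
      by simp
  qed
qed

lemma decoder_inv_stack_empty:
  assumes inv: "decoder_inv X y B U" and "gamma (X \<inter> {1..y}) = 0"
  shows "U = {}"
proof (rule ccontr)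
  assume "U \<noteq> {}"
  from inv have sub: "U \<subseteq> {1..y}" and gam: "gamma (X \<inter> {1..y}) = gamma (X \<inter> U)"
    and alt: "parity_alternating U"
    unfolding decoder_inv_def by auto
  have fin: "finite U"
    using sub finite_subset by blast
  then have "Min U \<in> U" and none_below: "{v\<in>U. v < Min U} = {}"
    using \<open>U \<noteq> {}\<close> by auto
  then have "Min U \<in> X \<inter> U"
    using decoder_inv_stack_mem[OF inv \<open>Min U \<in> U\<close>] unfolding none_below by simp
  moreover have "even a \<longleftrightarrow> even (Min U)" if "a \<in> X \<inter> U" for a
  proof -
    have "even (card {v\<in>U. v < a})"
      using that decoder_inv_stack_mem[OF inv] by blast
    moreover have "even (a + Min U + card {v\<in>U. v < a})"
      using that alt unfolding parity_alternating_def by blast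
    ultimately show ?thesis
      by presburger
  qed
  moreover have "finite (X \<inter> U)"
    using fin by simp
  ultimately have "gamma (X \<inter> U) \<noteq> 0"
    using gamma_uniform_parity[of "X \<inter> U" "Min U"] by blast
  with gam assms(2) show False
    by simp
qed

lemma gamma_odd_depth_set:
  assumes nested: "B \<in> nested_arcs m"
  shows "gamma (odd_depth_set B) = 0"
proof -
  have "decoder_inv (odd_depth_set B) m B {}"
    using decoder_inv_decode[of "odd_depth_set B" m] decode_odd_depth_set_top[OF nested] by simp
  then have "gamma (odd_depth_set B \<inter> {1..m}) = 0"
    unfolding decoder_inv_def by simp
  with odd_depth_set_subset_interval[OF nested] show ?thesis
    by (simp add: Int_absorb2)
qed

lemma odd_depth_set_surj:
  assumes "X \<subseteq> {1..m}" "gamma X = 0"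
  obtains B where "B \<in> nested_arcs m" "odd_depth_set B = X"
proof -
  obtain B U where "decode X m = (B, U)"
    by fastforce
  then have inv: "decoder_inv X m B U"
    using decoder_inv_decode[of X m] by simp
  moreover have "X \<inter> {1..m} = X"
    using assms(1) by blast
  ultimately have "U = {}"
    using decoder_inv_stack_empty assms(2) by simp
  with inv have nested: "B \<in> nested_arcs m" and enc: "\<forall>x\<in>{1..m}. x \<in> X \<longleftrightarrow> odd (depth B x)"
    unfolding decoder_inv_def by auto
  have "odd_depth_set B = X"
    using enc assms(1) odd_depth_set_subset_interval[OF nested] by (auto simp: odd_depth_set_def)
  with nested show ?thesis
    by (rule that)
qed

theorem bij_betw_odd_depth_set:
  "bij_betw odd_depth_set (nested_arcs m) {X. X \<subseteq> {1..m} \<and> gamma X = 0}"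
  unfolding bij_betw_def
proof
  show "inj_on odd_depth_set (nested_arcs m)"
    by (rule inj_on_odd_depth_set)
  show "odd_depth_set ` nested_arcs m = {X. X \<subseteq> {1..m} \<and> gamma X = 0}"
  proof (intro equalityI subsetI)
    fix X
    assume "X \<in> odd_depth_set ` nested_arcs m"
    then show "X \<in> {X. X \<subseteq> {1..m} \<and> gamma X = 0}"
      using odd_depth_set_subset_interval gamma_odd_depth_set by auto
  next
    fix X
    assume "X \<in> {X. X \<subseteq> {1..m} \<and> gamma X = 0}"
    then obtain B where "B \<in> nested_arcs m" "odd_depth_set B = X"
      using odd_depth_set_surj by blast
    then show "X \<in> odd_depth_set ` nested_arcs m"
      by blast
  qed
qed

section \<open>Pairings and subsets of \<open>[1, N]\<close>\<close>

lemma wr_odd: "odd (Max p - Min p) \<Longrightarrow> wr p = (Min p, Max p)"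
  unfolding wr_def by simp

lemma zero_cov_iff_tiled_by:
  assumes odd: "\<forall>p\<in>B. odd (Max p - Min p)"
  shows "zero_cov B Z \<longleftrightarrow> tiled_by B Z"
proof -
  have B1: "B1 B = B"
    using odd unfolding B1_def by auto
  have "ivl p = arc p" if "p \<in> B" for p
    using that odd wr_odd by (simp add: ivl_def arc_def)
  then have "disjoint_family_on ivl C = disjoint_family_on arc C \<and> ivl ` C = arc ` C"
    if "C \<subseteq> B" for C
    using that unfolding disjoint_family_on_def by (metis image_cong subsetD)
  then show ?thesis
    unfolding zero_cov_def tiled_by_def B1 by metis
qed

lemma X0p_iff:
  "B \<in> X0p N \<longleftrightarrow> B \<in> PN N \<and> N \<notin> \<Union>B \<and> (\<forall>p\<in>B. odd (Max p - Min p))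
     \<and> (\<forall>p\<in>B. tiled_by B {Min p<..<Max p})"
proof (cases "B \<in> PN N \<and> (\<forall>p\<in>B. odd (Max p - Min p))")
  case True
  then have B0: "B0 B = {}" and B1: "B1 B = B"
    by (auto simp: B0_def B1_def)
  then have "seqok B []"
    by (simp add: seqok_def)
  with True B0 B1 show ?thesis
    using zero_cov_iff_tiled_by wr_odd
    by (auto simp: X0p_def Xplus_def starPN_def condII_def sB_def supp_def)
next
  case False
  moreover have "finite B" if "B \<in> PN N"
    using that by (simp add: PN_def)
  ultimately show ?thesis
    by (auto simp: X0p_def Xplus_def starPN_def B0_def)
qed

lemma subset_interval_without_top:
  fixes A :: "nat set"
  shows "A \<subseteq> {1..N} \<and> N \<notin> A \<longleftrightarrow> A \<subseteq> {1..N - 1}"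
proof (intro iffI subsetI)
  fix x
  assume "A \<subseteq> {1..N} \<and> N \<notin> A" "x \<in> A"
  then have "1 \<le> x" "x \<le> N" "x \<noteq> N"
    by auto
  then show "x \<in> {1..N - 1}"
    by simp
next
  assume A: "A \<subseteq> {1..N - 1}"
  then have "1 \<le> x \<and> x \<le> N \<and> x \<noteq> N" if "x \<in> A" for x
    using that by fastforce
  then show "A \<subseteq> {1..N} \<and> N \<notin> A"
    by auto
qed

lemma X0p_eq_nested_arcs: "X0p N = nested_arcs (N - 1)"
proof (intro set_eqI)
  fix B
  note subset_interval_without_top[of _ N]
  then show "B \<in> X0p N \<longleftrightarrow> B \<in> nested_arcs (N - 1)"
    unfolding X0p_iff nested_arcs_def PN_def odd_arc_iff pairwise_def disjnt_def by blast
qed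

lemma eps'_X0p:
  assumes "B \<in> X0p N"
  shows "eps' N B = odd_depth_set B"
proof -
  from assms have "eps' N B = ssum N B"
    unfolding eps'_def X0p_def by simp
  moreover have nested: "B \<in> nested_arcs (N - 1)"
    using assms X0p_eq_nested_arcs by blast
  have "dbr N p = arc p" if "p \<in> B" for p
    using nested_endpoints(2)[OF nested that] nested_odd_arc[OF nested that] wr_odd
    by (auto simp: dbr_def arc_def odd_arc_iff)
  then have "{p\<in>B. x \<in> dbr N p} = {p\<in>B. x \<in> arc p}" for x
    by auto
  ultimately show ?thesis
    by (simp add: ssum_def odd_depth_set_def depth_def)
qed

lemma E0p_eq: "E0p N = {X. X \<subseteq> {1..N - 1} \<and> gamma X = 0}"
proof (intro set_eqI iffI)
  fix X
  assume "X \<in> E0p N"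
  then show "X \<in> {X. X \<subseteq> {1..N - 1} \<and> gamma X = 0}"
    using subset_interval_without_top[of X N] by (auto simp: E0p_def EN_def)
next
  fix X
  assume "X \<in> {X. X \<subseteq> {1..N - 1} \<and> gamma X = 0}"
  moreover have "finite X" if "X \<subseteq> {1..N - 1}"
    using that finite_subset by blast
  ultimately show "X \<in> E0p N"
    using even_card_if_gamma_zero subset_interval_without_top[of X N] by (auto simp: E0p_def EN_def)
qed

lemma bij_betw_Collect:
  assumes "bij_betw f A A'" "\<And>a. a \<in> A \<Longrightarrow> P a \<longleftrightarrow> Q (f a)"
  shows "bij_betw f {a\<in>A. P a} {b\<in>A'. Q b}"
  using assms unfolding bij_betw_def inj_on_def by (auto simp: image_iff)

theorem mainTheorem7:
  fixes N :: nat
  assumes "odd N" and "N \<ge> 3"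
  shows "bij_betw (eps' N) (X0p' N) (E0p' N) \<and> bij_betw (eps' N) (X0p'' N) (E0p'' N)"
proof -
  have "bij_betw odd_depth_set (X0p N) (E0p N)"
    unfolding X0p_eq_nested_arcs E0p_eq by (rule bij_betw_odd_depth_set)
  then have bij: "bij_betw (eps' N) (X0p N) (E0p N)"
    using eps'_X0p bij_betw_cong by metis
  have top: "N - 1 \<in> supp B \<longleftrightarrow> N - 1 \<in> eps' N B" if "B \<in> X0p N" for B
    using that top_in_odd_depth_set_iff eps'_X0p X0p_eq_nested_arcs unfolding supp_def by blast
  show ?thesis
    unfolding X0p'_def X0p''_def E0p'_def E0p''_def
    using bij_betw_Collect[OF bij] top by auto
qed

end
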